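(* Let $\Gamma\in\mathcal S$ have $n$ vertices and let $\varphi$ be an embedding as in the definition of $\mathcal S$. Then for every vertex $v$, either $\varphi(v)=E_{i_v}-\sum_{j\in J_v}E_j$ or $\varphi(v)=-2E_{i_v}-\sum_{j\in J_v}E_j$, for some index $i_v$ and some subset $J_v\subset\{1,\dots,n\}$ with $i_v\notin J_v$.
   Context: A plumbing tree is a finite tree $\Gamma$ each of whose vertices $v$ carries an integer decoration $d(v)$. $\Gamma$ is minimal if no vertex has decoration $-1$. For $n\ge 1$ let $(\mathbb Z^n,Q_n)$ be the lattice with basis $E_1,\dots,E_n$ and $Q_n(E_i,E_j)=-\delta_{ij}$, and let $K=\sum_{i=1}^n E_i$. A plumbing tree $\Gamma$ on $n$ vertices is a symplectic plumbing tree if there is a map $\varphi$ (an embedding) from its vertex set to $\mathbb Z^n$ such that: for distinct vertices $v_1,v_2$, $Q_n(\varphi(v_1),\varphi(v_2))$ is $1$ if they are adjacent and $0$ otherwise; $Q_n(\varphi(v),\varphi(v))=d(v)$ for every $v$; and $Q_n(\varphi(v),K)+Q_n(\varphi(v),\varphi(v))=-2$ for every $v$. $\mathcal S$ is the set of minimal, connected symplectic plumbing trees. *)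

theory Defs
  imports Main
begin

definition simple_graph :: "'a set \<Rightarrow> ('a \<Rightarrow> 'a \<Rightarrow> bool) \<Rightarrow> bool" where
  "simple_graph V E \<longleftrightarrow> finite V \<and> (\<forall>x y. E x y \<longrightarrow> x \<in> V \<and> y \<in> V)
     \<and> (\<forall>x y. E x y \<longrightarrow> E y x) \<and> (\<forall>x. \<not> E x x)"

definition graph_connected :: "'a set \<Rightarrow> ('a \<Rightarrow> 'a \<Rightarrow> bool) \<Rightarrow> bool" where
  "graph_connected V E \<longleftrightarrow> (\<forall>x\<in>V. \<forall>y\<in>V. E\<^sup>*\<^sup>* x y)"

definition is_cycle :: "('a \<Rightarrow> 'a \<Rightarrow> bool) \<Rightarrow> 'a list \<Rightarrow> bool" where
  "is_cycle E cs \<longleftrightarrow> length cs \<ge> 3 \<and> distinct cs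
     \<and> (\<forall>i. Suc i < length cs \<longrightarrow> E (cs ! i) (cs ! Suc i)) \<and> E (last cs) (hd cs)"

definition is_tree :: "'a set \<Rightarrow> ('a \<Rightarrow> 'a \<Rightarrow> bool) \<Rightarrow> bool" where
  "is_tree V E \<longleftrightarrow> simple_graph V E \<and> V \<noteq> {} \<and> graph_connected V E
     \<and> (\<nexists>cs. is_cycle E cs)"

(* Vectors of Z^n are functions nat \<Rightarrow> int supported on {1..n}. *)
definition in_Zn :: "nat \<Rightarrow> (nat \<Rightarrow> int) \<Rightarrow> bool" where
  "in_Zn n x \<longleftrightarrow> (\<forall>j. j \<notin> {1..n} \<longrightarrow> x j = 0)"

definition Qn :: "nat \<Rightarrow> (nat \<Rightarrow> int) \<Rightarrow> (nat \<Rightarrow> int) \<Rightarrow> int" where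
  "Qn n x y = - (\<Sum>i=1..n. x i * y i)"

definition Ebasis :: "nat \<Rightarrow> nat \<Rightarrow> int" where
  "Ebasis i = (\<lambda>j. if j = i then 1 else 0)"

definition Kvec :: "nat \<Rightarrow> nat \<Rightarrow> int" where
  "Kvec n = (\<lambda>j. if j \<in> {1..n} then 1 else 0)"

definition symplectic_embedding ::
  "nat \<Rightarrow> 'a set \<Rightarrow> ('a \<Rightarrow> 'a \<Rightarrow> bool) \<Rightarrow> ('a \<Rightarrow> int) \<Rightarrow> ('a \<Rightarrow> nat \<Rightarrow> int) \<Rightarrow> bool" where
  "symplectic_embedding n V E d \<phi> \<longleftrightarrow>
     (\<forall>v\<in>V. in_Zn n (\<phi> v))
   \<and> (\<forall>v1\<in>V. \<forall>v2\<in>V. v1 \<noteq> v2 \<longrightarrow> Qn n (\<phi> v1) (\<phi> v2) = (if E v1 v2 then 1 else 0))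
   \<and> (\<forall>v\<in>V. Qn n (\<phi> v) (\<phi> v) = d v)
   \<and> (\<forall>v\<in>V. Qn n (\<phi> v) (Kvec n) + Qn n (\<phi> v) (\<phi> v) = -2)"

definition minimal_plumbing :: "'a set \<Rightarrow> ('a \<Rightarrow> int) \<Rightarrow> bool" where
  "minimal_plumbing V d \<longleftrightarrow> (\<forall>v\<in>V. d v \<noteq> -1)"

definition in_S :: "'a set \<Rightarrow> ('a \<Rightarrow> 'a \<Rightarrow> bool) \<Rightarrow> ('a \<Rightarrow> int) \<Rightarrow> bool" where
  "in_S V E d \<longleftrightarrow> is_tree V E \<and> minimal_plumbing V d
     \<and> (\<exists>\<phi>. symplectic_embedding (card V) V E d \<phi>)"

end

theory Submission
  imports Defs
begin

(* As Q(x,K) = -\<Sum> x_j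
   and Q(x,x) = -\<Sum> x_j^2, the condition Q(x,K) + Q(x,x) = -2 says that the coordinates
   of x = \<phi> v satisfy \<Sum> x_j (x_j + 1) = 2. Each summand is even and nonnegative, so
   exactly one summand equals 2, forcing x_i \<in> {1, -2}, and all other summands vanish,
   forcing x_j \<in> {0, -1}. *)

lemma pronic_nonneg: "0 \<le> (x::int) * (x + 1)"
  by (cases "0 \<le> x") (auto intro: mult_nonpos_nonpos)

lemma pronic_eq_0_iff: "(x::int) * (x + 1) = 0 \<longleftrightarrow> x = 0 \<or> x = -1"
  by (auto simp: add_eq_0_iff2)

lemma pronic_eq_2_iff: "(x::int) * (x + 1) = 2 \<longleftrightarrow> x = 1 \<or> x = -2"
proof -
  have "x * (x + 1) - 2 = (x - 1) * (x + 2)"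
    by (simp add: algebra_simps)
  then show ?thesis
    by auto
qed

lemma sum_even_nonneg_eq_2:
  fixes f :: "'a \<Rightarrow> int"
  assumes "finite A" and nonneg: "\<And>a. a \<in> A \<Longrightarrow> 0 \<le> f a"
    and even: "\<And>a. a \<in> A \<Longrightarrow> even (f a)" and sum: "sum f A = 2"
  shows "\<exists>i\<in>A. f i = 2 \<and> (\<forall>j\<in>A - {i}. f j = 0)"
proof -
  obtain i where i: "i \<in> A" "f i \<noteq> 0"
    using sum by (metis sum.neutral zero_neq_numeral)
  have split: "sum f A = f i + sum f (A - {i})"
    using \<open>finite A\<close> i(1) by (simp add: sum.remove)
  have rest: "0 \<le> sum f (A - {i})"
    using nonneg by (intro sum_nonneg) auto
  have "2 \<le> f i"
    using i nonneg[of i] even[of i] by presburger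
  then have "f i = 2" and rest_0: "sum f (A - {i}) = 0"
    using split rest sum by linarith+
  moreover have "\<forall>j\<in>A - {i}. f j = 0"
    using rest_0 \<open>finite A\<close> nonneg sum_nonneg_eq_0_iff[of "A - {i}" f] by auto
  ultimately show ?thesis
    using i(1) by blast
qed

lemma Qn_Kvec: "Qn n x (Kvec n) = - (\<Sum>j=1..n. x j)"
  unfolding Qn_def Kvec_def by simp

lemma adjunction_iff_sum_pronic:
  "Qn n x (Kvec n) + Qn n x x = -2 \<longleftrightarrow> (\<Sum>j=1..n. x j * (x j + 1)) = 2"
  unfolding Qn_Kvec by (simp add: Qn_def algebra_simps sum.distrib)

lemma eq_Ebasis_minus_sum_Ebasis:
  fixes x :: "nat \<Rightarrow> int"
  assumes "in_Zn n x"
    and others: "\<And>j. j \<in> {1..n} - {i} \<Longrightarrow> x j = 0 \<or> x j = -1"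
  defines "J \<equiv> {j \<in> {1..n} - {i}. x j = -1}"
  shows "x = (\<lambda>j. x i * Ebasis i j - (\<Sum>k\<in>J. Ebasis k j))"
proof
  fix j
  have "(\<Sum>k\<in>J. Ebasis k j) = (if j \<in> J then 1 else 0)"
    unfolding Ebasis_def by (simp add: J_def)
  then show "x j = x i * Ebasis i j - (\<Sum>k\<in>J. Ebasis k j)"
    using assms(1) others[of j] unfolding in_Zn_def J_def Ebasis_def by auto
qed

lemma adjunctive_vector_shape:
  fixes x :: "nat \<Rightarrow> int"
  assumes "in_Zn n x" and "Qn n x (Kvec n) + Qn n x x = -2"
  shows "\<exists>i J. i \<in> {1..n} \<and> J \<subseteq> {1..n} \<and> i \<notin> J \<and>
           (x = (\<lambda>j. Ebasis i j - (\<Sum>k\<in>J. Ebasis k j))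
            \<or> x = (\<lambda>j. -2 * Ebasis i j - (\<Sum>k\<in>J. Ebasis k j)))"
proof -
  obtain i where i: "i \<in> {1..n}" "x i * (x i + 1) = 2"
    and others: "\<forall>j\<in>{1..n} - {i}. x j * (x j + 1) = 0"
    using sum_even_nonneg_eq_2[of "{1..n}" "\<lambda>j. x j * (x j + 1)"] assms(2) pronic_nonneg
    by (auto simp: adjunction_iff_sum_pronic)
  define J where "J = {j \<in> {1..n} - {i}. x j = -1}"
  have shape: "x = (\<lambda>j. x i * Ebasis i j - (\<Sum>k\<in>J. Ebasis k j))"
    unfolding J_def using eq_Ebasis_minus_sum_Ebasis assms(1) others pronic_eq_0_iff
    by blast
  have "x i = 1 \<or> x i = -2"
    using i(2) pronic_eq_2_iff by blast
  then have "x = (\<lambda>j. Ebasis i j - (\<Sum>k\<in>J. Ebasis k j))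
            \<or> x = (\<lambda>j. -2 * Ebasis i j - (\<Sum>k\<in>J. Ebasis k j))"
    using shape by auto
  moreover have "J \<subseteq> {1..n}" "i \<notin> J"
    unfolding J_def by auto
  ultimately show ?thesis
    using i(1) by blast
qed

theorem lemma3p1:
  fixes V :: "'a set" and E :: "'a \<Rightarrow> 'a \<Rightarrow> bool" and d :: "'a \<Rightarrow> int"
    and \<phi> :: "'a \<Rightarrow> nat \<Rightarrow> int" and n :: nat
  assumes "in_S V E d"
    and "card V = n"
    and "symplectic_embedding n V E d \<phi>"
  shows "\<forall>v\<in>V. \<exists>i J. i \<in> {1..n} \<and> J \<subseteq> {1..n} \<and> i \<notin> J \<and>
           (\<phi> v = (\<lambda>j. Ebasis i j - (\<Sum>k\<in>J. Ebasis k j))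
            \<or> \<phi> v = (\<lambda>j. -2 * Ebasis i j - (\<Sum>k\<in>J. Ebasis k j)))"
  using assms(3) adjunctive_vector_shape unfolding symplectic_embedding_def by blast

end
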